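(* Let $\theta \in (0,1)$ and let $X$ be a nonnegative random variable which is not almost surely zero and which is $\theta$-subscalable. Then $\mathbb{E}[X] = \infty$.
   Context: For $\theta \in (0,1)$, a nonnegative random variable $X$ with survival function $\overline{F}(x) = \mathbb{P}(X > x)$ is called $\theta$-subscalable if $\theta \, \overline{F}(x) \leq \overline{F}(x/\theta)$ for all $x \geq 0$. *)

theory Defs
  imports "HOL-Probability.Probability"
begin

definition survival :: "'a measure \<Rightarrow> ('a \<Rightarrow> real) \<Rightarrow> real \<Rightarrow> real" where
  "survival M X x = measure M {\<omega> \<in> space M. X \<omega> > x}"

definition subscalable :: "real \<Rightarrow> 'a measure \<Rightarrow> ('a \<Rightarrow> real) \<Rightarrow> bool" where
  "subscalable \<theta> M X \<longleftrightarrow> (\<forall>x\<ge>0. \<theta> * survival M X x \<le> survival M X (x / \<theta>))"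

end

theory Submission imports Defs begin

text \<open>Pick x0 > 0 with P(X > x0) > 0 and cut the half-line along the geometric grid
  x n = x0 / \<theta>^n. Iterated subscalability gives P(X > x (n+1)) \<ge> \<theta>^(n+1) P(X > x0), while the
  layer (x n, x (n+1)] has width x0 (1 - \<theta>) / \<theta>^(n+1). So each of the infinitely many layers
  contributes at least x0 (1 - \<theta>) P(X > x0) > 0 to E[X].\<close>

lemma sum_increments_below_le:
  fixes x :: "nat \<Rightarrow> real"
  assumes "incseq x"
  shows "(\<Sum>n<N. (x (Suc n) - x n) * of_bool (x (Suc n) < t)) \<le> max 0 (min t (x N) - x 0)"
proof (induction N)
  case 0
  then show ?case by simp
next
  case (Suc N)
  have "x N \<le> x (Suc N)" "x 0 \<le> x N"
    using assms by (auto simp: incseq_def)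
  with Suc show ?case
    by (cases "x (Suc N) < t")
      (simp_all only: sum.lessThan_Suc of_bool_def if_True if_False, auto simp: max_def min_def)
qed

lemma nn_integral_ge_suminf_layers:
  fixes x :: "nat \<Rightarrow> real"
  assumes "X \<in> borel_measurable M" "\<forall>\<omega>\<in>space M. 0 \<le> X \<omega>" "incseq x" "0 \<le> x 0"
  shows "(\<Sum>n. ennreal (x (Suc n) - x n) * emeasure M {\<omega> \<in> space M. x (Suc n) < X \<omega>})
    \<le> (\<integral>\<^sup>+ \<omega>. ennreal (X \<omega>) \<partial>M)"
proof -
  define A where "A n = {\<omega> \<in> space M. x (Suc n) < X \<omega>}" for n
  define d where "d n = x (Suc n) - x n" for n
  have A_sets[measurable]: "A n \<in> sets M" for n unfolding A_def using assms(1) by measurable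
  have d_nonneg: "0 \<le> d n" for n unfolding d_def using assms(3) by (simp add: incseq_SucD)
  have "(\<Sum>n. ennreal (d n) * emeasure M (A n)) = (\<Sum>n. \<integral>\<^sup>+ \<omega>. ennreal (d n) * indicator (A n) \<omega> \<partial>M)"
    by (simp add: nn_integral_cmult_indicator A_sets)
  also have "\<dots> = \<integral>\<^sup>+ \<omega>. (\<Sum>n. ennreal (d n) * indicator (A n) \<omega>) \<partial>M"
    by (rule nn_integral_suminf[symmetric]) measurable
  also have "\<dots> \<le> \<integral>\<^sup>+ \<omega>. ennreal (X \<omega>) \<partial>M"
  proof (rule nn_integral_mono, rule suminf_le_const[OF summableI])
    fix \<omega> N assume "\<omega> \<in> space M"
    then have "(\<Sum>n<N. ennreal (d n) * indicator (A n) \<omega>)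
        = ennreal (\<Sum>n<N. d n * of_bool (x (Suc n) < X \<omega>))"
      by (simp add: A_def d_nonneg indicator_def ennreal_mult' flip: sum_ennreal)
    also have "\<dots> \<le> ennreal (X \<omega>)"
      using sum_increments_below_le[OF assms(3), where N=N and t="X \<omega>"] assms(2,4) \<open>\<omega> \<in> space M\<close>
      by (intro ennreal_leI) (auto simp: d_def)
    finally show "(\<Sum>n<N. ennreal (d n) * indicator (A n) \<omega>) \<le> ennreal (X \<omega>)" .
  qed
  finally show ?thesis unfolding A_def d_def .
qed

lemma survival_pos_if_not_AE_zero:
  assumes "finite_measure M" "X \<in> borel_measurable M" "\<forall>\<omega>\<in>space M. 0 \<le> X \<omega>"
    and "\<not> (AE \<omega> in M. X \<omega> = 0)"
  obtains x where "0 < x" "0 < survival M X x"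
proof -
  interpret finite_measure M by fact
  define A where "A n = {\<omega> \<in> space M. 1 / Suc n < X \<omega>}" for n
  have nonzero_subset: "{\<omega> \<in> space M. X \<omega> \<noteq> 0} \<subseteq> (\<Union>n. A n)"
  proof
    fix \<omega> assume "\<omega> \<in> {\<omega> \<in> space M. X \<omega> \<noteq> 0}"
    then have "\<omega> \<in> space M" "0 < X \<omega>" using assms(3) by force+
    moreover obtain n where "1 / Suc n < X \<omega>"
      using \<open>0 < X \<omega>\<close> by (rule nat_approx_posE)
    ultimately show "\<omega> \<in> (\<Union>n. A n)" unfolding A_def by blast
  qed
  have "(\<Union>n. A n) \<notin> null_sets M"
  proof
    assume "(\<Union>n. A n) \<in> null_sets M"
    with nonzero_subset have "AE \<omega> in M. X \<omega> = 0" by (auto intro: AE_I')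
    with assms(4) show False ..
  qed
  then obtain n where "A n \<notin> null_sets M" by blast
  moreover have "A n \<in> sets M" unfolding A_def using assms(2) by measurable
  ultimately have "measure M (A n) \<noteq> 0"
    by (metis emeasure_eq_measure ennreal_0 null_setsI)
  then have "0 < survival M X (1 / Suc n)"
    unfolding survival_def A_def by (simp add: zero_less_measure_iff)
  then show thesis by (rule that[rotated]) simp
qed

lemma subscalable_power:
  assumes "subscalable \<theta> M X" "0 < \<theta>" "0 \<le> x"
  shows "\<theta> ^ n * survival M X x \<le> survival M X (x / \<theta> ^ n)"
proof (induction n)
  case 0
  then show ?case by simp
next
  case (Suc n)
  have "\<theta> ^ Suc n * survival M X x = \<theta> * (\<theta> ^ n * survival M X x)" by simp
  also have "\<dots> \<le> \<theta> * survival M X (x / \<theta> ^ n)"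
    using Suc assms(2) by (simp add: mult_left_mono)
  also have "\<dots> \<le> survival M X (x / \<theta> ^ n / \<theta>)"
    using assms unfolding subscalable_def by (metis divide_nonneg_pos zero_less_power)
  also have "x / \<theta> ^ n / \<theta> = x / \<theta> ^ Suc n" by (simp add: field_simps)
  finally show ?case .
qed

lemma subscalable_geometric_layer:
  assumes "subscalable \<theta> M X" "0 < \<theta>" "\<theta> \<le> 1" "0 \<le> x"
  shows "x * (1 - \<theta>) * survival M X x
    \<le> (x / \<theta> ^ Suc n - x / \<theta> ^ n) * survival M X (x / \<theta> ^ Suc n)"
proof -
  have width: "x / \<theta> ^ Suc n - x / \<theta> ^ n = x * (1 - \<theta>) / \<theta> ^ Suc n"
    using assms(2) by (simp add: field_simps)
  have "x * (1 - \<theta>) * survival M X x = x * (1 - \<theta>) / \<theta> ^ Suc n * (\<theta> ^ Suc n * survival M X x)"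
    using assms(2) by simp
  also have "\<dots> \<le> x * (1 - \<theta>) / \<theta> ^ Suc n * survival M X (x / \<theta> ^ Suc n)"
    using assms by (intro mult_left_mono subscalable_power) auto
  finally show ?thesis unfolding width .
qed

lemma nn_integral_eq_infinity_if_layers_ge:
  fixes x :: "nat \<Rightarrow> real"
  assumes "finite_measure M" "X \<in> borel_measurable M" "\<forall>\<omega>\<in>space M. 0 \<le> X \<omega>"
    and "0 \<le> x 0" "0 < c"
    and layer: "\<And>n. c \<le> (x (Suc n) - x n) * survival M X (x (Suc n))"
  shows "(\<integral>\<^sup>+ \<omega>. ennreal (X \<omega>) \<partial>M) = \<infinity>"
proof -
  interpret finite_measure M by fact
  have "incseq x"
  proof (rule incseq_SucI)
    fix n
    have "0 < (x (Suc n) - x n) * survival M X (x (Suc n))"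
      using \<open>0 < c\<close> layer[of n] by linarith
    moreover have "0 \<le> survival M X (x (Suc n))"
      unfolding survival_def by simp
    ultimately show "x n \<le> x (Suc n)"
      by (simp add: zero_less_mult_iff)
  qed
  have "top = (\<Sum>n. ennreal c)"
    by (rule summable_iff_suminf_neq_top[symmetric]) (use \<open>0 < c\<close> in \<open>auto simp: summable_const_iff\<close>)
  also have "\<dots> \<le> (\<Sum>n. ennreal (x (Suc n) - x n) * emeasure M {\<omega> \<in> space M. x (Suc n) < X \<omega>})"
  proof (intro suminf_le summableI)
    fix n
    have "ennreal c \<le> ennreal ((x (Suc n) - x n) * survival M X (x (Suc n)))"
      using layer by (rule ennreal_leI)
    also have "\<dots> = ennreal (x (Suc n) - x n) * emeasure M {\<omega> \<in> space M. x (Suc n) < X \<omega>}"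
      by (simp add: survival_def emeasure_eq_measure ennreal_mult'')
    finally show "ennreal c \<le> ennreal (x (Suc n) - x n) * emeasure M {\<omega> \<in> space M. x (Suc n) < X \<omega>}" .
  qed
  also have "\<dots> \<le> (\<integral>\<^sup>+ \<omega>. ennreal (X \<omega>) \<partial>M)"
    by (rule nn_integral_ge_suminf_layers[OF assms(2,3) \<open>incseq x\<close> \<open>0 \<le> x 0\<close>])
  finally show ?thesis by (simp add: top_unique infinity_ennreal_def)
qed

theorem lemma5:
  fixes M :: "'a measure" and X :: "'a \<Rightarrow> real" and \<theta> :: real
  assumes "prob_space M"
    and "X \<in> borel_measurable M"
    and "\<forall>\<omega>\<in>space M. X \<omega> \<ge> 0"
    and "\<not> (AE \<omega> in M. X \<omega> = 0)"
    and "0 < \<theta>" and "\<theta> < 1"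
    and "subscalable \<theta> M X"
  shows "(\<integral>\<^sup>+ \<omega>. ennreal (X \<omega>) \<partial>M) = \<infinity>"
proof -
  have finite_M: "finite_measure M"
    using assms(1) by (rule prob_space.finite_measure)
  obtain x0 where x0: "0 < x0" "0 < survival M X x0"
    using survival_pos_if_not_AE_zero[OF finite_M assms(2-4)] .
  show ?thesis
  proof (rule nn_integral_eq_infinity_if_layers_ge[OF finite_M assms(2,3),
      where x = "\<lambda>n. x0 / \<theta> ^ n" and c = "x0 * (1 - \<theta>) * survival M X x0"])
    show "0 \<le> x0 / \<theta> ^ 0" using x0 by simp
    show "0 < x0 * (1 - \<theta>) * survival M X x0" using x0 assms(6) by simp
    show "x0 * (1 - \<theta>) * survival M X x0
      \<le> (x0 / \<theta> ^ Suc n - x0 / \<theta> ^ n) * survival M X (x0 / \<theta> ^ Suc n)" for n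
      using assms(5-7) x0 by (intro subscalable_geometric_layer) auto
  qed
qed

end
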